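(* Let $K,L$ be compact Hausdorff spaces and suppose there are continuous maps $e\colon L\to K$ and $r\colon K\to L$ with $r\circ e=\mathrm{Id}_L$. If $C(K)$ has the ball fixed point property, then $C(L)$ has the ball fixed point property.
   Context: $C(K)$ is the real Banach space of continuous functions on compact $K$ with the sup norm. A real Banach space $X$ has the ball fixed point property (BFPP) if every nonexpansive map $T\colon B_X\to B_X$ (i.e. $\|Tx-Ty\|\le\|x-y\|$) has a fixed point, where $B_X$ is the closed unit ball. *)

theory Defs
  imports "HOL-Analysis.Analysis"
begin

text \<open>The real Banach space C(X) of continuous real functions on a compact space X,
  represented as functions that are continuous on topspace X and vanish outside it
  (so that equality of elements of C(X) is equality of HOL functions).\<close>
definition Cspace :: "'a topology \<Rightarrow> ('a \<Rightarrow> real) set" where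
  "Cspace X = {f. continuous_map X euclideanreal f \<and> (\<forall>x. x \<notin> topspace X \<longrightarrow> f x = 0)}"

definition supnorm :: "'a topology \<Rightarrow> ('a \<Rightarrow> real) \<Rightarrow> real" where
  "supnorm X f = Sup ({0} \<union> (\<lambda>x. \<bar>f x\<bar>) ` topspace X)"

definition Cball :: "'a topology \<Rightarrow> ('a \<Rightarrow> real) set" where
  "Cball X = {f \<in> Cspace X. supnorm X f \<le> 1}"

definition BFPP_C :: "'a topology \<Rightarrow> bool" where
  "BFPP_C X \<longleftrightarrow>
     (\<forall>T. (\<forall>f\<in>Cball X. T f \<in> Cball X) \<and>
          (\<forall>f\<in>Cball X. \<forall>g\<in>Cball X. supnorm X (T f - T g) \<le> supnorm X (f - g))
        \<longrightarrow> (\<exists>f\<in>Cball X. T f = f))"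

end

theory Submission
  imports Defs
begin

text \<open>If the unit ball of C(L) is a nonexpansive retract of the unit ball of C(K), then a
  nonexpansive self-map T of the ball of C(L) lifts to the nonexpansive self-map J \<circ> T \<circ> P
  of the ball of C(K); applying P to a fixed point of the lift gives a fixed point of T. For
  continuous maps e and r with r \<circ> e = id, the composition operators P g = g \<circ> e and
  J f = f \<circ> r provide such a retraction.\<close>

definition Ccomp :: "'a topology \<Rightarrow> ('a \<Rightarrow> 'b) \<Rightarrow> ('b \<Rightarrow> real) \<Rightarrow> 'a \<Rightarrow> real" where
  "Ccomp X p g = (\<lambda>x. if x \<in> topspace X then g (p x) else 0)"

lemma BFPP_C_nonexpansive_retract:
  assumes BFPP: "BFPP_C K"
    and P_Cball: "\<And>f. f \<in> Cball K \<Longrightarrow> P f \<in> Cball L"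
    and J_Cball: "\<And>g. g \<in> Cball L \<Longrightarrow> J g \<in> Cball K"
    and P_nonexp: "\<And>f f'. f \<in> Cball K \<Longrightarrow> f' \<in> Cball K \<Longrightarrow>
                     supnorm L (P f - P f') \<le> supnorm K (f - f')"
    and J_nonexp: "\<And>g g'. g \<in> Cball L \<Longrightarrow> g' \<in> Cball L \<Longrightarrow>
                     supnorm K (J g - J g') \<le> supnorm L (g - g')"
    and P_J: "\<And>g. g \<in> Cball L \<Longrightarrow> P (J g) = g"
  shows "BFPP_C L"
  unfolding BFPP_C_def
proof (intro allI impI)
  fix T
  assume "(\<forall>g\<in>Cball L. T g \<in> Cball L) \<and>
          (\<forall>g\<in>Cball L. \<forall>g'\<in>Cball L. supnorm L (T g - T g') \<le> supnorm L (g - g'))"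
  then have T_Cball: "\<And>g. g \<in> Cball L \<Longrightarrow> T g \<in> Cball L"
    and T_nonexp: "\<And>g g'. g \<in> Cball L \<Longrightarrow> g' \<in> Cball L \<Longrightarrow>
                     supnorm L (T g - T g') \<le> supnorm L (g - g')"
    by blast+
  define S where "S = J \<circ> T \<circ> P"
  have S_Cball: "\<forall>f\<in>Cball K. S f \<in> Cball K"
    by (simp add: S_def P_Cball T_Cball J_Cball)
  have S_nonexp: "\<forall>f\<in>Cball K. \<forall>f'\<in>Cball K. supnorm K (S f - S f') \<le> supnorm K (f - f')"
  proof (intro ballI)
    fix f f' assume f: "f \<in> Cball K" and f': "f' \<in> Cball K"
    have "supnorm K (S f - S f') \<le> supnorm L (T (P f) - T (P f'))"
      by (simp add: S_def J_nonexp T_Cball P_Cball f f')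
    also have "\<dots> \<le> supnorm L (P f - P f')"
      by (simp add: T_nonexp P_Cball f f')
    also have "\<dots> \<le> supnorm K (f - f')"
      by (rule P_nonexp[OF f f'])
    finally show "supnorm K (S f - S f') \<le> supnorm K (f - f')" .
  qed
  obtain f where f: "f \<in> Cball K" "S f = f"
    using BFPP S_Cball S_nonexp unfolding BFPP_C_def by blast
  have "T (P f) = P (S f)"
    by (simp add: S_def P_J T_Cball P_Cball f(1))
  with f show "\<exists>g\<in>Cball L. T g = g"
    using P_Cball by auto
qed

lemma Cspace_diff: "f \<in> Cspace X \<Longrightarrow> g \<in> Cspace X \<Longrightarrow> f - g \<in> Cspace X"
  unfolding Cspace_def fun_diff_def by (auto intro: continuous_map_diff)

lemma bdd_above_abs_Cspace:
  assumes "f \<in> Cspace X" "compact_space X"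
  shows "bdd_above ((\<lambda>x. \<bar>f x\<bar>) ` topspace X)"
proof -
  have "continuous_map X euclideanreal (\<lambda>x. \<bar>f x\<bar>)"
    using assms(1) unfolding Cspace_def by (auto intro: continuous_map_real_abs)
  then have "compactin euclideanreal ((\<lambda>x. \<bar>f x\<bar>) ` topspace X)"
    using image_compactin assms(2) compact_space_def by blast
  then show ?thesis
    by (simp add: compactin_euclidean_iff bounded_imp_bdd_above compact_imp_bounded)
qed

lemma Ccomp_in_Cspace:
  assumes "continuous_map X Y p" "g \<in> Cspace Y"
  shows "Ccomp X p g \<in> Cspace X"
proof -
  have "continuous_map X euclideanreal (g \<circ> p)"
    using assms unfolding Cspace_def by (auto intro: continuous_map_compose)
  then have "continuous_map X euclideanreal (Ccomp X p g)"
    by (rule continuous_map_eq) (simp add: Ccomp_def)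
  then show ?thesis
    unfolding Cspace_def Ccomp_def by auto
qed

text \<open>Compactness of Y is what keeps the supremum defining supnorm Y g from being junk.\<close>

lemma supnorm_Ccomp_le:
  assumes "continuous_map X Y p" "g \<in> Cspace Y" "compact_space Y"
  shows "supnorm X (Ccomp X p g) \<le> supnorm Y g"
  unfolding supnorm_def
proof (rule cSup_subset_mono)
  show "{0} \<union> (\<lambda>x. \<bar>Ccomp X p g x\<bar>) ` topspace X \<noteq> {}"
    by simp
  show "bdd_above ({0} \<union> (\<lambda>y. \<bar>g y\<bar>) ` topspace Y)"
    using bdd_above_abs_Cspace[OF assms(2,3)] by simp
  show "{0} \<union> (\<lambda>x. \<bar>Ccomp X p g x\<bar>) ` topspace X \<subseteq> {0} \<union> (\<lambda>y. \<bar>g y\<bar>) ` topspace Y"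
    using continuous_map_image_subset_topspace[OF assms(1)] by (auto simp: Ccomp_def)
qed

lemma Ccomp_diff: "Ccomp X p f - Ccomp X p g = Ccomp X p (f - g)"
  by (auto simp: Ccomp_def fun_eq_iff)

lemma Ccomp_in_Cball:
  assumes "continuous_map X Y p" "g \<in> Cball Y" "compact_space Y"
  shows "Ccomp X p g \<in> Cball X"
  using assms Ccomp_in_Cspace supnorm_Ccomp_le unfolding Cball_def by fastforce

lemma supnorm_Ccomp_diff_le:
  assumes "continuous_map X Y p" "f \<in> Cball Y" "g \<in> Cball Y" "compact_space Y"
  shows "supnorm X (Ccomp X p f - Ccomp X p g) \<le> supnorm Y (f - g)"
  using assms by (auto simp: Ccomp_diff Cball_def intro: supnorm_Ccomp_le Cspace_diff)

lemma Ccomp_Ccomp_retraction: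
  assumes "continuous_map L K e" "\<forall>x\<in>topspace L. r (e x) = x" "g \<in> Cspace L"
  shows "Ccomp L e (Ccomp K r g) = g"
  using assms continuous_map_image_subset_topspace[OF assms(1)]
  by (auto simp: Ccomp_def fun_eq_iff Cspace_def)

theorem mainTheorem12:
  fixes K :: "'a topology" and L :: "'b topology"
    and e :: "'b \<Rightarrow> 'a" and r :: "'a \<Rightarrow> 'b"
  assumes "compact_space K" "Hausdorff_space K"
    and "compact_space L" "Hausdorff_space L"
    and "continuous_map L K e" "continuous_map K L r"
    and "\<forall>x\<in>topspace L. r (e x) = x"
    and "BFPP_C K"
  shows "BFPP_C L"
proof (rule BFPP_C_nonexpansive_retract[where P = "Ccomp L e" and J = "Ccomp K r"])
  show "BFPP_C K" by fact
  show "\<And>f. f \<in> Cball K \<Longrightarrow> Ccomp L e f \<in> Cball L"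
    using assms(1,5) by (simp add: Ccomp_in_Cball)
  show "\<And>g. g \<in> Cball L \<Longrightarrow> Ccomp K r g \<in> Cball K"
    using assms(3,6) by (simp add: Ccomp_in_Cball)
  show "\<And>f f'. f \<in> Cball K \<Longrightarrow> f' \<in> Cball K \<Longrightarrow>
          supnorm L (Ccomp L e f - Ccomp L e f') \<le> supnorm K (f - f')"
    using assms(1,5) by (simp add: supnorm_Ccomp_diff_le)
  show "\<And>g g'. g \<in> Cball L \<Longrightarrow> g' \<in> Cball L \<Longrightarrow>
          supnorm K (Ccomp K r g - Ccomp K r g') \<le> supnorm L (g - g')"
    using assms(3,6) by (simp add: supnorm_Ccomp_diff_le)
  show "\<And>g. g \<in> Cball L \<Longrightarrow> Ccomp L e (Ccomp K r g) = g"
    using assms(5,7) by (simp add: Ccomp_Ccomp_retraction Cball_def)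
qed

end
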